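(* Let $(c_t)_{t=0}^\infty\subset\mathbb{S}^1$ be a sequence of unit vectors in $\mathbb{R}^2$ and $\omega:\mathsf{P}^2_+\to\mathbb{R}_{\ge0}$ a function with $\omega(X)\le C\sqrt{\lambda_{\max}(X)}$ for all $X\in\mathsf{P}^2_+$, for some constant $C>0$. Let $\lambda_0\ge4\sqrt2\,C+2$ and define $V_t\in\mathbb{R}^{2\times2}$ by $$V_0=\lambda_0\mathbb{I}_{2\times2},\qquad V_{t+1}=V_t+\omega(V_t)\big(a^+_{t+1}(a^+_{t+1})^{\mathsf T}+a^-_{t+1}(a^-_{t+1})^{\mathsf T}\big),$$ where $$a^\pm_{t+1}=\frac{c_t\pm\frac{1}{\sqrt{\lambda_{\min}(V_t)}}v_{t,\min}}{\sqrt{1\pm\frac{2\langle c_t,v_{t,\min}\rangle}{\sqrt{\lambda_{\min}(V_t)}}+\frac{1}{\lambda_{\min}(V_t)}}}$$ and $v_{t,\min}$ is a normalized eigenvector of $V_t$ for its minimum eigenvalue. Then $\lambda_{\min}(V_t)\ge\sqrt{2\lambda_{\max}(V_t)}$ for all $t\ge0$.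
   Context: $\mathsf{P}^2_+$ denotes the set of real positive semidefinite $2\times2$ matrices; $\lambda_{\min},\lambda_{\max}$ are the minimal and maximal eigenvalues. *)

theory Defs
  imports "HOL-Analysis.Analysis"
begin

definition psd2 :: "real^2^2 \<Rightarrow> bool" where
  "psd2 X \<longleftrightarrow> transpose X = X \<and> (\<forall>x. 0 \<le> x \<bullet> (X *v x))"

definition eigvals2 :: "real^2^2 \<Rightarrow> real set" where
  "eigvals2 X = {l. \<exists>v. v \<noteq> 0 \<and> X *v v = l *\<^sub>R v}"

definition lam_min :: "real^2^2 \<Rightarrow> real" where
  "lam_min X = Min (eigvals2 X)"

definition lam_max :: "real^2^2 \<Rightarrow> real" where
  "lam_max X = Max (eigvals2 X)"

definition outer2 :: "real^2 \<Rightarrow> real^2^2" where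
  "outer2 a = (\<chi> i j. a $ i * a $ j)"

end

theory Submission
  imports Defs
begin

text \<open>Write \<open>\<lambda>\<close> and \<open>\<mu>\<close> for the two eigenvalues of \<open>V\<^sub>t\<close>, \<open>v\<close> for the minimal unit eigenvector
  and \<open>s = 1/\<surd>\<lambda>\<close>. The vectors \<open>a\<^sup>\<pm>\<close> are exactly the normalisations of \<open>c\<^sub>t \<pm> s v\<close>, so the update
  adds \<open>2 \<omega>\<close> to the trace. For a minimal unit eigenvector \<open>u\<close> of \<open>V\<^sub>t\<^sub>+\<^sub>1\<close> and \<open>p = \<langle>u, v\<rangle>\<close>, the
  spectral decomposition of \<open>V\<^sub>t\<close> gives
  \<open>\<lambda>' = \<lambda> p\<^sup>2 + \<mu> (1 - p\<^sup>2) + \<omega> (\<langle>a\<^sup>+, u\<rangle>\<^sup>2 + \<langle>a\<^sup>-, u\<rangle>\<^sup>2)\<close>, and the Engel form of Cauchy-Schwarz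
  bounds the last bracket below by \<open>2 p\<^sup>2 / (\<lambda> + 1)\<close>. If \<open>2 \<mu> \<le> \<lambda>\<^sup>2\<close>, the hypothesis on \<open>\<omega>\<close> gives
  \<open>4 \<omega> \<le> \<lambda> (\<lambda> - 2)\<close>, and these facts yield \<open>\<lambda>' \<ge> \<lambda>\<close> and \<open>\<lambda>'\<^sup>2 + 2 \<lambda>' \<ge> 2 tr V\<^sub>t\<^sub>+\<^sub>1 = 2 (\<lambda>' + \<mu>')\<close>.
  Hence \<open>2 \<mu> \<le> \<lambda>\<^sup>2\<close> is preserved by the recursion.\<close>

lemma inner_vec2: "(x::real^2) \<bullet> y = x$1 * y$1 + x$2 * y$2"
  by (simp add: inner_vec_def sum_2)

lemma matrix_vector_mult_vec2:
  "((A::real^2^2) *v x)$1 = A$1$1 * x$1 + A$1$2 * x$2"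
  "(A *v x)$2 = A$2$1 * x$1 + A$2$2 * x$2"
  by (simp_all add: matrix_vector_mult_def sum_2)

lemma vec2_eq_iff: "(x::real^2) = y \<longleftrightarrow> x$1 = y$1 \<and> x$2 = y$2"
  by (simp add: vec_eq_iff forall_2)

lemma trace_vec2: "trace (X::real^2^2) = X$1$1 + X$2$2"
  by (simp add: trace_def sum_2)

lemma transpose_vec2_eq_iff: "transpose (X::real^2^2) = X \<longleftrightarrow> X$1$2 = X$2$1"
  by (auto simp: transpose_def vec_eq_iff forall_2)

lemma unit_eigenvector_in_eigvals2:
  assumes "norm v = 1" and "X *v v = l *\<^sub>R v"
  shows "l \<in> eigvals2 X"
  using assms unfolding eigvals2_def by (auto intro!: exI[of _ v])

lemma eigvals2_char_poly:
  assumes "l \<in> eigvals2 (X::real^2^2)"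
  shows "(X$1$1 - l) * (X$2$2 - l) - X$1$2 * X$2$1 = 0"
proof -
  obtain v where "v \<noteq> 0" and ev: "X *v v = l *\<^sub>R v"
    using assms unfolding eigvals2_def by blast
  then have nz: "v$1 \<noteq> 0 \<or> v$2 \<noteq> 0" by (simp add: vec2_eq_iff)
  have e1: "X$1$1 * v$1 + X$1$2 * v$2 = l * v$1" and e2: "X$2$1 * v$1 + X$2$2 * v$2 = l * v$2"
    using ev by (simp_all add: vec2_eq_iff matrix_vector_mult_vec2)
  have "((X$1$1 - l) * (X$2$2 - l) - X$1$2 * X$2$1) * v$1 = 0"
       "((X$1$1 - l) * (X$2$2 - l) - X$1$2 * X$2$1) * v$2 = 0"
    using e1 e2 by algebra+
  then show ?thesis using nz by auto
qed

lemma symmetric_eigvals2_complement: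
  assumes "transpose X = X" and "l \<in> eigvals2 (X::real^2^2)"
  shows "trace X - l \<in> eigvals2 X"
proof -
  obtain v where "v \<noteq> 0" and ev: "X *v v = l *\<^sub>R v"
    using assms(2) unfolding eigvals2_def by blast
  define u :: "real^2" where "u = vector [- v$2, v$1]"
  have "u \<noteq> 0" using \<open>v \<noteq> 0\<close> by (auto simp: u_def vec2_eq_iff)
  moreover have "X *v u = (trace X - l) *\<^sub>R u"
    using ev assms(1)
    by (simp add: u_def vec2_eq_iff matrix_vector_mult_vec2 trace_vec2 transpose_vec2_eq_iff
        algebra_simps)
  ultimately show ?thesis unfolding eigvals2_def by blast
qed

lemma symmetric_eigvals2:
  assumes "transpose X = X" and "l \<in> eigvals2 (X::real^2^2)"
  shows "eigvals2 X = {l, trace X - l}"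
proof
  show "eigvals2 X \<subseteq> {l, trace X - l}"
  proof
    fix k assume "k \<in> eigvals2 X"
    then have "(k - l) * (k - (X$1$1 + X$2$2 - l)) = 0"
      using eigvals2_char_poly[of k X] eigvals2_char_poly[OF assms(2)] by algebra
    then show "k \<in> {l, trace X - l}" by (auto simp: trace_vec2)
  qed
  show "{l, trace X - l} \<subseteq> eigvals2 X"
    using assms symmetric_eigvals2_complement by blast
qed

lemma
  assumes "transpose X = X" and "eigvals2 (X::real^2^2) \<noteq> {}"
  shows lam_min_add_lam_max: "lam_min X + lam_max X = trace X"
    and lam_min_le_lam_max: "lam_min X \<le> lam_max X"
proof -
  obtain l where "eigvals2 X = {l, trace X - l}"
    using assms symmetric_eigvals2 by blast
  then show "lam_min X + lam_max X = trace X" "lam_min X \<le> lam_max X"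
    by (simp_all add: lam_min_def lam_max_def)
qed

lemma eigvals2_scaled_identity: "eigvals2 (a *\<^sub>R mat 1 :: real^2^2) = {a}"
  by (auto simp: eigvals2_def vec2_eq_iff matrix_vector_mult_vec2 mat_def intro!: exI[of _ "axis 1 1"])

lemma quadratic_form_spectral:
  assumes "transpose X = X" and "norm v = 1" and "(X::real^2^2) *v v = l *\<^sub>R v" and "norm x = 1"
  shows "x \<bullet> (X *v x) = l * (x \<bullet> v)^2 + (trace X - l) * (1 - (x \<bullet> v)^2)"
proof -
  have e1: "X$1$1 * v$1 + X$1$2 * v$2 = l * v$1" and e2: "X$2$1 * v$1 + X$2$2 * v$2 = l * v$2"
    using assms(3) by (simp_all add: vec2_eq_iff matrix_vector_mult_vec2)
  have "v$1^2 + v$2^2 = 1" "x$1^2 + x$2^2 = 1"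
    using assms(2,4) by (simp_all add: norm_eq_1 inner_vec2 power2_eq_square)
  then show ?thesis
    using e1 e2 assms(1)
    unfolding inner_vec2 matrix_vector_mult_vec2 trace_vec2 transpose_vec2_eq_iff by algebra
qed

lemma trace_scaleR: "trace (r *\<^sub>R (A::real^'n^'n)) = r * trace A"
  by (simp add: trace_def sum_distrib_left)

lemma psd2_add: "psd2 A \<Longrightarrow> psd2 B \<Longrightarrow> psd2 (A + B)"
  by (simp add: psd2_def transpose_def vec_eq_iff matrix_vector_mult_add_rdistrib inner_add_right)

lemma psd2_scaleR: "0 \<le> r \<Longrightarrow> psd2 A \<Longrightarrow> psd2 (r *\<^sub>R A)"
  by (simp add: psd2_def transpose_scalar flip: scaleR_matrix_vector_assoc)

lemma inner_outer2: "x \<bullet> (outer2 a *v x) = (a \<bullet> x)^2"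
  by (simp add: inner_vec2 matrix_vector_mult_vec2 outer2_def power2_eq_square algebra_simps)

lemma psd2_outer2: "psd2 (outer2 a)"
  unfolding psd2_def inner_outer2 by (simp add: transpose_vec2_eq_iff outer2_def)

lemma trace_outer2: "trace (outer2 a) = (norm a)^2"
  by (simp add: trace_vec2 outer2_def power2_norm_eq_inner inner_vec2)

lemma psd2_scaled_identity: "0 \<le> a \<Longrightarrow> psd2 (a *\<^sub>R mat 1)"
  by (simp add: psd2_def transpose_scalar scaleR_matrix_vector_assoc[symmetric])

lemma norm_unit_add_scaleR_sq:
  fixes c v :: "'a::real_inner"
  assumes "norm c = 1" and "norm v = 1"
  shows "(norm (c + s *\<^sub>R v))^2 = 1 + 2 * s * (c \<bullet> v) + s^2"
  using assms unfolding power2_norm_eq_inner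
  by (simp add: inner_add_left inner_add_right inner_commute norm_eq_1 power2_eq_square)

lemma unit_add_scaleR_nonzero:
  fixes c v :: "'a::real_normed_vector"
  assumes "norm c = 1" and "norm v = 1" and "\<bar>s\<bar> < 1"
  shows "c + s *\<^sub>R v \<noteq> 0"
proof -
  have "1 - \<bar>s\<bar> \<le> norm (c + s *\<^sub>R v)"
    using norm_diff_ineq[of c "s *\<^sub>R v"] assms(1,2) by simp
  then show ?thesis using assms(3) by auto
qed

lemma sgn_update_directions:
  fixes c v :: "'a::real_inner"
  assumes "norm c = 1" and "norm v = 1" and "0 < l"
  shows "sgn (c + (1 / sqrt l) *\<^sub>R v) =
           (1 / sqrt (1 + 2 * (c \<bullet> v) / sqrt l + 1 / l)) *\<^sub>R (c + (1 / sqrt l) *\<^sub>R v)"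
    and "sgn (c - (1 / sqrt l) *\<^sub>R v) =
           (1 / sqrt (1 - 2 * (c \<bullet> v) / sqrt l + 1 / l)) *\<^sub>R (c - (1 / sqrt l) *\<^sub>R v)"
proof -
  have sq: "(1 / sqrt l)^2 = 1 / l" using assms(3) by (simp add: power_divide)
  have "norm (c + (1 / sqrt l) *\<^sub>R v) = sqrt (1 + 2 * (c \<bullet> v) / sqrt l + 1 / l)"
    using norm_unit_add_scaleR_sq[OF assms(1,2), of "1 / sqrt l"] sq
    by (simp add: real_sqrt_unique)
  then show "sgn (c + (1 / sqrt l) *\<^sub>R v) =
           (1 / sqrt (1 + 2 * (c \<bullet> v) / sqrt l + 1 / l)) *\<^sub>R (c + (1 / sqrt l) *\<^sub>R v)"
    by (simp add: sgn_div_norm divide_inverse)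
  have "norm (c - (1 / sqrt l) *\<^sub>R v) = sqrt (1 - 2 * (c \<bullet> v) / sqrt l + 1 / l)"
    using norm_unit_add_scaleR_sq[OF assms(1,2), of "- 1 / sqrt l"] sq
    by (simp add: real_sqrt_unique)
  then show "sgn (c - (1 / sqrt l) *\<^sub>R v) =
           (1 / sqrt (1 - 2 * (c \<bullet> v) / sqrt l + 1 / l)) *\<^sub>R (c - (1 / sqrt l) *\<^sub>R v)"
    by (simp add: sgn_div_norm divide_inverse)
qed

lemma sum_sq_div_le:
  fixes a b x y :: real
  assumes "0 < a" and "0 < b"
  shows "(x + y)^2 / (a + b) \<le> x^2 / a + y^2 / b"
proof -
  have "x^2 / a + y^2 / b - (x + y)^2 / (a + b) = (b * x - a * y)^2 / (a * b * (a + b))"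
    using assms by (simp add: field_simps power2_eq_square)
  also have "\<dots> \<ge> 0" using assms by simp
  finally show ?thesis by simp
qed

lemma inner_sgn_pair_sq_ge:
  fixes c v x :: "'a::real_inner"
  assumes "norm c = 1" and "norm v = 1" and "\<bar>s\<bar> < 1"
  shows "2 * s^2 * (v \<bullet> x)^2 / (1 + s^2) \<le>
           (sgn (c + s *\<^sub>R v) \<bullet> x)^2 + (sgn (c - s *\<^sub>R v) \<bullet> x)^2"
proof -
  define yp ym where "yp = c + s *\<^sub>R v" and "ym = c + (- s) *\<^sub>R v"
  have sgn_sq: "(sgn y \<bullet> x)^2 = (y \<bullet> x)^2 / (norm y)^2" for y :: 'a
    by (simp add: sgn_div_norm field_simps)
  have "yp \<noteq> 0" "ym \<noteq> 0"
    unfolding yp_def ym_def using assms(3)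
    by (auto intro!: unit_add_scaleR_nonzero[OF assms(1,2)] simp del: scaleR_minus_left)
  then have pos: "0 < (norm yp)^2" "0 < (norm ym)^2" by auto
  have norm_sum: "(norm yp)^2 + (norm ym)^2 = 2 * (1 + s^2)"
    unfolding yp_def ym_def norm_unit_add_scaleR_sq[OF assms(1,2)] by simp
  have inner_gap: "yp \<bullet> x + (- (ym \<bullet> x)) = 2 * s * (v \<bullet> x)"
    by (simp add: yp_def ym_def inner_add_left inner_diff_left)
  have "2 * s^2 * (v \<bullet> x)^2 / (1 + s^2) = (2 * s * (v \<bullet> x))^2 / (2 * (1 + s^2))"
    using add_pos_nonneg[OF zero_less_one zero_le_power2[of s]]
    by (simp add: field_simps)
  also have "\<dots> \<le> (yp \<bullet> x)^2 / (norm yp)^2 + (ym \<bullet> x)^2 / (norm ym)^2"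
    using sum_sq_div_le[OF pos, of "yp \<bullet> x" "- (ym \<bullet> x)"] norm_sum inner_gap by simp
  finally show ?thesis
    by (simp add: sgn_sq yp_def ym_def)
qed

lemma eigenvalue_update_bounds:
  fixes l mu W m P :: real
  assumes P: "0 \<le> P" "P \<le> 1" and W: "0 \<le> W" and m: "0 \<le> m" "2 * P \<le> m * (l + 1)"
    and mu: "l \<le> mu" "2 * mu \<le> l^2" and l: "2 \<le> l" and W_le: "4 * W \<le> l * (l - 2)"
  defines "f \<equiv> l * P + mu * (1 - P) + W * m"
  shows "l \<le> f" and "2 * (l + mu + 2 * W) \<le> f^2 + 2 * f"
proof -
  define G Q where "G = mu - l" and "Q = 1 - P"
  have G: "0 \<le> G" and Q: "0 \<le> Q" using mu P by (simp_all add: G_def Q_def)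
  have f_eq: "f = l + G * Q + W * m" by (simp add: f_def G_def Q_def algebra_simps)
  have GQ: "0 \<le> G * Q" and Wm: "0 \<le> W * m" using G Q W m by simp_all
  show "l \<le> f" using f_eq GQ Wm by simp
  have "f^2 + 2 * f - 2 * (l + mu + 2 * W) =
      (l^2 - 2 * mu) * P + Q * (l * (l - 2) - 4 * W) + 2 * (G * Q) * l + (G * Q)^2
      + 2 * (W * m) * (G * Q) + (W * m)^2 + 2 * W * (m * (l + 1) - 2 * P)"
    by (simp add: f_eq G_def Q_def power2_eq_square algebra_simps)
  moreover have "0 \<le> (l^2 - 2 * mu) * P" "0 \<le> Q * (l * (l - 2) - 4 * W)"
      "0 \<le> 2 * (G * Q) * l" "0 \<le> 2 * (W * m) * (G * Q)" "0 \<le> 2 * W * (m * (l + 1) - 2 * P)"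
    using P Q GQ Wm W m mu l W_le by simp_all
  ultimately show "2 * (l + mu + 2 * W) \<le> f^2 + 2 * f"
    using zero_le_power2[of "G * Q"] zero_le_power2[of "W * m"] by linarith
qed

lemma weight_bound:
  fixes W C M l :: real
  assumes "0 \<le> C" and "W \<le> C * sqrt M" and "2 * M \<le> l^2" and "4 * sqrt 2 * C + 2 \<le> l"
  shows "4 * W \<le> l * (l - 2)"
proof -
  have l: "2 \<le> l" using assms(1,4) by (smt (verit) mult_nonneg_nonneg real_sqrt_ge_zero)
  have "sqrt M \<le> sqrt (l^2 / 2)" using assms(3) by simp
  also have "\<dots> = l / sqrt 2" using l by (simp add: real_sqrt_divide)
  finally have "4 * W \<le> 4 * C * (l / sqrt 2)"
    using assms(1,2) mult_left_mono by fastforce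
  also have "\<dots> = (4 * sqrt 2 * C) * l / 2"
    by (simp add: field_simps)
  also have "\<dots> \<le> (l - 2) * l / 2"
    using assms(4) l by (intro divide_right_mono mult_right_mono) auto
  also have "\<dots> \<le> l * (l - 2)" using l by simp
  finally show ?thesis .
qed

lemma update_preserves_balance:
  fixes V V' :: "real^2^2" and c v u :: "real^2" and W :: real
  defines "s \<equiv> 1 / sqrt (lam_min V)"
  assumes psd: "psd2 V" and l_ge: "2 \<le> lam_min V" and balanced: "2 * lam_max V \<le> (lam_min V)^2"
    and c: "norm c = 1" and v: "norm v = 1" "V *v v = lam_min V *\<^sub>R v"
    and W: "0 \<le> W" "4 * W \<le> lam_min V * (lam_min V - 2)"
    and V': "V' = V + W *\<^sub>R (outer2 (sgn (c + s *\<^sub>R v)) + outer2 (sgn (c - s *\<^sub>R v)))"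
    and u: "norm u = 1" "V' *v u = lam_min V' *\<^sub>R u"
  shows "psd2 V'" and "lam_min V \<le> lam_min V'" and "2 * lam_max V' \<le> (lam_min V')^2"
proof -
  define l mu where "l = lam_min V" and "mu = lam_max V"
  define ap am where "ap = sgn (c + s *\<^sub>R v)" and "am = sgn (c - s *\<^sub>R v)"
  define p m where "p = u \<bullet> v" and "m = (ap \<bullet> u)^2 + (am \<bullet> u)^2"
  have sym: "transpose V = V" using psd by (simp add: psd2_def)
  have "eigvals2 V \<noteq> {}" using unit_eigenvector_in_eigvals2[OF v] by blast
  then have trace_V: "trace V = l + mu" and l_le_mu: "l \<le> mu"
    using lam_min_add_lam_max[OF sym] lam_min_le_lam_max[OF sym] by (simp_all add: l_def mu_def)
  have s_sq: "s^2 = 1 / l" using l_ge by (simp add: s_def l_def power_divide)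
  have s_lt: "\<bar>s\<bar> < 1" using l_ge by (simp add: s_def)
  have "norm ap = 1" "norm am = 1"
    unfolding ap_def am_def norm_sgn using unit_add_scaleR_nonzero[OF c v(1), of s]
      unit_add_scaleR_nonzero[OF c v(1), of "- s"] s_lt by auto
  then have trace_V': "trace V' = l + mu + 2 * W"
    by (simp add: V' ap_def am_def trace_V trace_add trace_scaleR trace_outer2)
  show psd': "psd2 V'"
    unfolding V' using psd W(1) by (intro psd2_add psd2_scaleR psd2_outer2)
  then have sym': "transpose V' = V'" by (simp add: psd2_def)
  have "eigvals2 V' \<noteq> {}" using unit_eigenvector_in_eigvals2[OF u] by blast
  then have lam_max_V': "lam_max V' = trace V' - lam_min V'"
    using lam_min_add_lam_max[OF sym'] by simp
  have "lam_min V' = u \<bullet> (V' *v u)" using u by (simp add: norm_eq_1)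
  also have "\<dots> = u \<bullet> (V *v u) + W * m"
    by (simp add: V' m_def ap_def am_def matrix_vector_mult_add_rdistrib inner_add_right
        inner_outer2 flip: scaleR_matrix_vector_assoc)
  also have "\<dots> = l * p^2 + mu * (1 - p^2) + W * m"
    using quadratic_form_spectral[OF sym v(1) v(2) u(1)] trace_V
    by (simp add: l_def p_def)
  finally have lam_min_V': "lam_min V' = l * p^2 + mu * (1 - p^2) + W * m" .
  have "\<bar>p\<bar> \<le> 1" using Cauchy_Schwarz_ineq2[of u v] u(1) v(1) by (simp add: p_def)
  then have p_sq: "p^2 \<le> 1" using power_le_one[of "\<bar>p\<bar>" 2] by simp
  have l_pos: "0 < l" using l_ge by (simp add: l_def)
  have "2 * p^2 / (l + 1) = 2 * s^2 * p^2 / (1 + s^2)"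
    using l_pos by (simp add: s_sq field_simps)
  also have "\<dots> \<le> m"
    using inner_sgn_pair_sq_ge[OF c v(1) s_lt, of u]
    by (simp add: m_def ap_def am_def p_def inner_commute)
  finally have m_ge: "2 * p^2 \<le> m * (l + 1)"
    using l_pos by (simp add: pos_divide_le_eq)
  have l_ge2: "2 \<le> l" and mu_le: "2 * mu \<le> l^2" and W_le: "4 * W \<le> l * (l - 2)"
    using l_ge balanced W(2) by (simp_all add: l_def mu_def)
  have "0 \<le> m" by (simp add: m_def)
  note bounds = eigenvalue_update_bounds[OF zero_le_power2 p_sq W(1) this m_ge l_le_mu mu_le l_ge2 W_le,
      folded lam_min_V']
  show "lam_min V \<le> lam_min V'" using bounds(1) by (simp add: l_def)
  show "2 * lam_max V' \<le> (lam_min V')^2" using bounds(2) lam_max_V' trace_V' by simp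
qed

theorem mainTheorem9:
  fixes c :: "nat \<Rightarrow> real^2" and w :: "real^2^2 \<Rightarrow> real"
    and C lam0 :: real and V :: "nat \<Rightarrow> real^2^2" and v :: "nat \<Rightarrow> real^2"
  assumes c_unit: "\<And>t. norm (c t) = 1"
    and C_pos: "C > 0"
    and w_nonneg: "\<And>X. psd2 X \<Longrightarrow> 0 \<le> w X"
    and w_bound: "\<And>X. psd2 X \<Longrightarrow> w X \<le> C * sqrt (lam_max X)"
    and lam0_ge: "lam0 \<ge> 4 * sqrt 2 * C + 2"
    and v_eig: "\<And>t. norm (v t) = 1 \<and> V t *v v t = lam_min (V t) *\<^sub>R v t"
    and V0: "V 0 = lam0 *\<^sub>R mat 1"
    and VSuc: "\<And>t. V (Suc t) = V t + w (V t) *\<^sub>R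
        (outer2 ((1 / sqrt (1 + 2 * (c t \<bullet> v t) / sqrt (lam_min (V t)) + 1 / lam_min (V t)))
                   *\<^sub>R (c t + (1 / sqrt (lam_min (V t))) *\<^sub>R v t))
       + outer2 ((1 / sqrt (1 - 2 * (c t \<bullet> v t) / sqrt (lam_min (V t)) + 1 / lam_min (V t)))
                   *\<^sub>R (c t - (1 / sqrt (lam_min (V t))) *\<^sub>R v t)))"
  shows "\<forall>t. lam_min (V t) \<ge> sqrt (2 * lam_max (V t))"
proof -
  have lam0_ge2: "2 \<le> lam0" using lam0_ge C_pos by (smt (verit) mult_nonneg_nonneg real_sqrt_ge_zero)
  have invariant: "psd2 (V t) \<and> lam0 \<le> lam_min (V t) \<and> 2 * lam_max (V t) \<le> (lam_min (V t))^2" for t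
  proof (induction t)
    case 0
    have "2 * lam0 \<le> lam0^2" using lam0_ge2 by (simp add: power2_eq_square)
    then show ?case using lam0_ge2
      by (simp add: V0 eigvals2_scaled_identity psd2_scaled_identity lam_min_def lam_max_def)
  next
    case (Suc t)
    let ?l = "lam_min (V t)"
    have W: "0 \<le> w (V t)" "4 * w (V t) \<le> ?l * (?l - 2)"
      using Suc lam0_ge w_nonneg w_bound weight_bound[of C "w (V t)" "lam_max (V t)" ?l] C_pos
      by auto
    have "V (Suc t) = V t + w (V t) *\<^sub>R (outer2 (sgn (c t + (1 / sqrt ?l) *\<^sub>R v t))
                                          + outer2 (sgn (c t - (1 / sqrt ?l) *\<^sub>R v t)))"
      using VSuc[of t] sgn_update_directions[OF c_unit[of t] conjunct1[OF v_eig[of t]], of ?l]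
        Suc lam0_ge2 by simp
    from update_preserves_balance[OF _ _ _ c_unit _ _ W this] show ?case
      using Suc v_eig lam0_ge2 by fastforce
  qed
  show ?thesis
  proof
    fix t
    show "lam_min (V t) \<ge> sqrt (2 * lam_max (V t))"
      using invariant[of t] lam0_ge2 by (intro real_le_lsqrt) auto
  qed
qed

end
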